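(* Let $r \ge 2$, $t \ge 2$ and $k \ge 1$ be integers with $k \ge t-3$. Let $G$ be a graph on $n$ vertices, where $$(r-1)(t-1)k < n \le (r-1)(t-1)(k+1),$$ and suppose $$\delta(G) \ge n - \left\lceil \frac{k}{k+1}\left\lceil \frac{n}{r-1}\right\rceil \right\rceil.$$ Then $G \rightarrow (K_r, P_t)$; that is, for every colouring of the edges of $G$ with the two colours red and blue, there is either a red copy of $K_r$ (a complete graph on $r$ vertices all of whose edges are red) or a blue copy of $P_t$ (a path on $t$ vertices all of whose edges are blue).
   Context: $\delta(G)$ denotes the minimum degree of $G$. $K_r$ is the complete graph on $r$ vertices and $P_t$ is the path on $t$ vertices. The notation $G \rightarrow (K_r,P_t)$ means every red/blue edge-colouring of $G$ contains a red $K_r$ or a blue $P_t$ as a subgraph. *)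

theory Defs
  imports Complex_Main
begin

definition simple_graph :: "'a set \<Rightarrow> 'a set set \<Rightarrow> bool" where
  "simple_graph V E \<longleftrightarrow> finite V \<and> (\<forall>e\<in>E. e \<subseteq> V \<and> card e = 2)"

definition degree :: "'a set set \<Rightarrow> 'a \<Rightarrow> nat" where
  "degree E v = card {u. {v, u} \<in> E}"

text \<open>Minimum degree delta(G) (V assumed finite and nonempty).\<close>
definition min_degree :: "'a set \<Rightarrow> 'a set set \<Rightarrow> nat" where
  "min_degree V E = Min (degree E ` V)"

text \<open>A red/blue edge colouring is a function c : E -> bool; c e = True means e is red.
  Red copy of K_r: r vertices, all pairs among them are edges coloured red.\<close>
definition has_red_clique :: "'a set \<Rightarrow> 'a set set \<Rightarrow> ('a set \<Rightarrow> bool) \<Rightarrow> nat \<Rightarrow> bool" where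
  "has_red_clique V E c r \<longleftrightarrow>
     (\<exists>S\<subseteq>V. card S = r \<and> (\<forall>x\<in>S. \<forall>y\<in>S. x \<noteq> y \<longrightarrow> {x, y} \<in> E \<and> c {x, y}))"

definition has_blue_path :: "'a set \<Rightarrow> 'a set set \<Rightarrow> ('a set \<Rightarrow> bool) \<Rightarrow> nat \<Rightarrow> bool" where
  "has_blue_path V E c t \<longleftrightarrow>
     (\<exists>ps. length ps = t \<and> distinct ps \<and> set ps \<subseteq> V \<and>
        (\<forall>i. Suc i < t \<longrightarrow> {ps ! i, ps ! Suc i} \<in> E \<and> \<not> c {ps ! i, ps ! Suc i}))"

definition arrows :: "'a set \<Rightarrow> 'a set set \<Rightarrow> nat \<Rightarrow> nat \<Rightarrow> bool" where
  "arrows V E r t \<longleftrightarrow>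
     (\<forall>c :: 'a set \<Rightarrow> bool. has_red_clique V E c r \<or> has_blue_path V E c t)"

end

theory Submission
  imports Defs "HOL-Combinatorics.Transposition"
begin

text \<open>
  Fix a colouring without a blue \<open>P_t\<close> and call two distinct vertices adjacent in \<open>H\<close> if they are not
  joined by a red edge, so that a red \<open>K_r\<close> is an independent \<open>r\<close>-set of \<open>H\<close>. With
  \<open>m = ceil(n/(r-1))\<close> and \<open>d = ceil(k m/(k+1))\<close> every vertex has fewer than \<open>d\<close> non-neighbours
  in \<open>G\<close>. We show by induction that every vertex set \<open>W\<close> contains an independent set of \<open>H\<close> of size
  at least \<open>|W|/(m-1)\<close>, which exceeds \<open>r - 1\<close> for \<open>W = V\<close>.
  If some vertex has \<open>H\<close>-degree at most \<open>m - 2\<close>, take it and recurse outside its closed neighbourhood.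
  Otherwise every vertex has at least \<open>m - d \<ge> t - 2\<close> blue neighbours, and a graph of minimum degree
  \<open>t - 2\<close> without \<open>P_t\<close> is a disjoint union of copies of \<open>K_(t-1)\<close>. Then \<open>H\<close> is \<open>(m-1)\<close>-regular and
  an \<open>H\<close>-clique on \<open>m\<close> vertices would be a union of blue \<open>K_(t-1)\<close>'s, impossible as \<open>t - 1\<close> does
  not divide \<open>m\<close>; so Brooks' theorem colours \<open>H\<close> with \<open>m - 1\<close> colours (for \<open>m = 3\<close> a parity argument
  is used instead).
\<close>

section \<open>Graphs, colourings and cliques\<close>

definition nbrs :: "('a \<Rightarrow> 'a \<Rightarrow> bool) \<Rightarrow> 'a set \<Rightarrow> 'a \<Rightarrow> 'a set" where
  "nbrs adj S v = {u\<in>S. adj v u}"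

definition proper_colouring :: "('a \<Rightarrow> 'a \<Rightarrow> bool) \<Rightarrow> 'a set \<Rightarrow> ('a \<Rightarrow> nat) \<Rightarrow> bool" where
  "proper_colouring adj S f \<longleftrightarrow> (\<forall>u\<in>S. \<forall>v\<in>S. adj u v \<longrightarrow> f u \<noteq> f v)"

definition colourable :: "('a \<Rightarrow> 'a \<Rightarrow> bool) \<Rightarrow> 'a set \<Rightarrow> nat \<Rightarrow> bool" where
  "colourable adj S D \<longleftrightarrow> (\<exists>f. (\<forall>v\<in>S. f v < D) \<and> proper_colouring adj S f)"

definition clique :: "('a \<Rightarrow> 'a \<Rightarrow> bool) \<Rightarrow> 'a set \<Rightarrow> bool" where
  "clique adj X \<longleftrightarrow> (\<forall>u\<in>X. \<forall>v\<in>X. u \<noteq> v \<longrightarrow> adj u v)"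

definition has_clique :: "('a \<Rightarrow> 'a \<Rightarrow> bool) \<Rightarrow> 'a set \<Rightarrow> nat \<Rightarrow> bool" where
  "has_clique adj S s \<longleftrightarrow> (\<exists>X\<subseteq>S. card X = s \<and> clique adj X)"

definition indep_set :: "('a \<Rightarrow> 'a \<Rightarrow> bool) \<Rightarrow> 'a set \<Rightarrow> bool" where
  "indep_set adj I \<longleftrightarrow> (\<forall>u\<in>I. \<forall>v\<in>I. \<not> adj u v)"

definition path :: "('a \<Rightarrow> 'a \<Rightarrow> bool) \<Rightarrow> 'a set \<Rightarrow> 'a list \<Rightarrow> bool" where
  "path adj S ps \<longleftrightarrow> distinct ps \<and> set ps \<subseteq> S \<and> successively adj ps"

lemma finite_nbrs: "finite S \<Longrightarrow> finite (nbrs adj S v)"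
  unfolding nbrs_def by simp

lemma nbrs_mono: "S \<subseteq> T \<Longrightarrow> nbrs adj S v \<subseteq> nbrs adj T v"
  unfolding nbrs_def by auto

lemma card_nbrs_mono: "finite T \<Longrightarrow> S \<subseteq> T \<Longrightarrow> card (nbrs adj S v) \<le> card (nbrs adj T v)"
  by (intro card_mono finite_nbrs nbrs_mono)

lemma not_in_nbrs_self: "irreflp adj \<Longrightarrow> v \<notin> nbrs adj S v"
  unfolding nbrs_def by (simp add: irreflpD)

lemma symp_iff: "symp R \<Longrightarrow> R x y \<longleftrightarrow> R y x"
  by (blast dest: sympD)

lemma has_clique_mono: "has_clique adj S s \<Longrightarrow> S \<subseteq> T \<Longrightarrow> has_clique adj T s"
  unfolding has_clique_def by blast

lemma proper_colouring_extend:
  assumes "finite W" "irreflp adj" "symp adj" "w \<in> W"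
    and f: "proper_colouring adj (W - {w}) f"
    and less: "card (nbrs adj W w) < card L"
  obtains c where "c \<in> L" "proper_colouring adj W (f(w := c))"
proof -
  have "card (f ` nbrs adj W w) < card L"
    using less card_image_le[OF finite_nbrs[OF \<open>finite W\<close>]] by (meson le_less_trans)
  moreover have "finite (f ` nbrs adj W w)"
    using \<open>finite W\<close> by (simp add: finite_nbrs)
  ultimately have "\<not> L \<subseteq> f ` nbrs adj W w"
    using card_mono not_le by blast
  then obtain c where c: "c \<in> L" "c \<notin> f ` nbrs adj W w"
    by blast
  have "proper_colouring adj W (f(w := c))"
    unfolding proper_colouring_def
  proof (intro ballI impI)
    fix u v assume "u \<in> W" "v \<in> W" "adj u v"
    moreover have "u \<noteq> v" "adj v u"
      using \<open>adj u v\<close> assms(2,3) by (auto simp: irreflpD symp_def)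
    ultimately show "(f(w := c)) u \<noteq> (f(w := c)) v"
      using c f unfolding proper_colouring_def nbrs_def by (auto simp: image_iff)
  qed
  with c that show ?thesis by blast
qed

lemma list_colouring_if_degenerate:
  assumes "finite W" "irreflp adj" "symp adj"
    and "\<And>S. S \<subseteq> W \<Longrightarrow> S \<noteq> {} \<Longrightarrow> \<exists>w\<in>S. card (nbrs adj S w) < card (L w)"
  shows "\<exists>f. (\<forall>w\<in>W. f w \<in> L w) \<and> proper_colouring adj W f"
  using assms(1,4)
proof (induction "card W" arbitrary: W rule: less_induct)
  case less
  show ?case
  proof (cases "W = {}")
    case True thus ?thesis unfolding proper_colouring_def by auto
  next
    case False
    then obtain w where w: "w \<in> W" "card (nbrs adj W w) < card (L w)"
      using less.prems by blast
    have "card (W - {w}) < card W"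
      using less.prems(1) w(1) by (rule card_Diff1_less)
    then obtain f where f: "\<forall>v\<in>W - {w}. f v \<in> L v" "proper_colouring adj (W - {w}) f"
      using less.hyps[of "W - {w}"] less.prems by blast
    obtain c where "c \<in> L w" "proper_colouring adj W (f(w := c))"
      using proper_colouring_extend[OF less.prems(1) assms(2,3) w(1) f(2) w(2)] .
    with f show ?thesis by (intro exI[of _ "f(w := c)"]) auto
  qed
qed

lemma colourable_if_low_degree:
  assumes "finite W" "irreflp adj" "symp adj" "w \<in> W"
    and "colourable adj (W - {w}) D" "card (nbrs adj W w) < D"
  shows "colourable adj W D"
proof -
  obtain f where f: "\<forall>v\<in>W - {w}. f v < D" "proper_colouring adj (W - {w}) f"
    using assms(5) unfolding colourable_def by blast
  obtain c where "c \<in> {..<D}" "proper_colouring adj W (f(w := c))"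
    using proper_colouring_extend[OF assms(1-4) f(2), of "{..<D}"] assms(6) by auto
  with f show ?thesis unfolding colourable_def by (intro exI[of _ "f(w := c)"]) auto
qed

lemma colourable_Un:
  assumes "symp adj"
    and f: "proper_colouring adj A f" "\<forall>v\<in>A. f v < D"
    and g: "proper_colouring adj B g" "\<forall>v\<in>B. g v < D"
    and \<sigma>: "bij_betw \<sigma> {..<D} {..<D}" "\<forall>v\<in>A \<inter> B. \<sigma> (f v) = g v"
    and separated: "\<forall>u\<in>A - B. \<forall>v\<in>B - A. \<not> adj u v"
  shows "colourable adj (A \<union> B) D"
proof -
  define h where "h v = (if v \<in> A then \<sigma> (f v) else g v)" for v
  have "h v < D" if "v \<in> A \<union> B" for v
    using that f(2) g(2) bij_betw_apply[OF \<sigma>(1)] unfolding h_def by auto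
  moreover have "proper_colouring adj (A \<union> B) h"
    unfolding proper_colouring_def
  proof (intro ballI impI)
    fix u v assume "u \<in> A \<union> B" "v \<in> A \<union> B" "adj u v"
    moreover have "adj v u" using \<open>adj u v\<close> \<open>symp adj\<close> by (simp add: symp_def)
    moreover have "\<sigma> a \<noteq> \<sigma> b" if "a < D" "b < D" "a \<noteq> b" for a b
      using that bij_betw_imp_inj_on[OF \<sigma>(1)] by (simp add: inj_on_eq_iff)
    ultimately show "h u \<noteq> h v"
      using f g \<sigma>(2) separated unfolding proper_colouring_def h_def by (metis DiffI IntI UnE)
  qed
  ultimately show ?thesis unfolding colourable_def by blast
qed

lemma exists_colour_permutation:
  fixes a b a' b' D :: nat
  assumes "a < D" "b < D" "a' < D" "b' < D" "a = b \<longleftrightarrow> a' = b'"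
  obtains \<sigma> where "bij_betw \<sigma> {..<D} {..<D}" "\<sigma> a = a'" "\<sigma> b = b'"
proof
  let ?\<tau> = "transpose a a'"
  show "bij_betw (transpose (?\<tau> b) b' \<circ> ?\<tau>) {..<D} {..<D}"
    using assms(1-4) by (intro bij_betw_trans[where B = "{..<D}"]) (auto simp: transpose_def)
  show "(transpose (?\<tau> b) b' \<circ> ?\<tau>) a = a'" "(transpose (?\<tau> b) b' \<circ> ?\<tau>) b = b'"
    using assms(5) by (auto simp: transpose_def)
qed

lemma colourable_Un_two_common:
  assumes "symp adj"
    and f: "proper_colouring adj A f" "\<forall>v\<in>A. f v < D"
    and g: "proper_colouring adj B g" "\<forall>v\<in>B. g v < D"
    and common: "A \<inter> B \<subseteq> {x, y}" "x \<in> A \<inter> B" "y \<in> A \<inter> B" "f x = f y \<longleftrightarrow> g x = g y"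
    and separated: "\<forall>u\<in>A - B. \<forall>v\<in>B - A. \<not> adj u v"
  shows "colourable adj (A \<union> B) D"
proof -
  obtain \<sigma> where "bij_betw \<sigma> {..<D} {..<D}" "\<sigma> (f x) = g x" "\<sigma> (f y) = g y"
    using exists_colour_permutation[of "f x" D "f y" "g x" "g y"] f(2) g(2) common(2-4) by auto
  moreover have "\<forall>v\<in>A \<inter> B. \<sigma> (f v) = g v"
    using calculation(2,3) common(1) by auto
  ultimately show ?thesis using colourable_Un[OF assms(1) f g] separated by blast
qed

definition add_edge :: "('a \<Rightarrow> 'a \<Rightarrow> bool) \<Rightarrow> 'a \<Rightarrow> 'a \<Rightarrow> 'a \<Rightarrow> 'a \<Rightarrow> bool" where
  "add_edge adj x y u v \<longleftrightarrow> adj u v \<or> (u = x \<and> v = y) \<or> (u = y \<and> v = x)"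

lemma symp_add_edge: "symp adj \<Longrightarrow> symp (add_edge adj x y)"
  unfolding symp_def add_edge_def by blast

lemma irreflp_add_edge: "irreflp adj \<Longrightarrow> x \<noteq> y \<Longrightarrow> irreflp (add_edge adj x y)"
  unfolding irreflp_def add_edge_def by blast

lemma proper_colouring_add_edgeD:
  assumes "proper_colouring (add_edge adj x y) S f"
  shows "proper_colouring adj S f" and "x \<in> S \<Longrightarrow> y \<in> S \<Longrightarrow> f x \<noteq> f y"
  using assms unfolding proper_colouring_def add_edge_def by blast+

lemma clique_add_edge: "clique (add_edge adj x y) X \<Longrightarrow> \<not> (x \<in> X \<and> y \<in> X) \<Longrightarrow> clique adj X"
  unfolding clique_def add_edge_def by blast

lemma card_nbrs_add_edge_le:
  assumes "finite W" and deg: "\<forall>v\<in>W. card (nbrs adj W v) \<le> D" and "A \<subseteq> W" "x \<in> A" "y \<in> A"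
    and p: "p \<in> W - A" "adj x p" and q: "q \<in> W - A" "adj y q" and "v \<in> A"
  shows "card (nbrs (add_edge adj x y) A v) \<le> D"
proof -
  have "finite A" using \<open>finite W\<close> \<open>A \<subseteq> W\<close> by (rule finite_subset[rotated])
  have lost_nbr: "card (nbrs adj A u) < D" if "u \<in> A" "r \<in> W - A" "adj u r" for u r
  proof -
    have "nbrs adj A u \<subset> nbrs adj W u"
      using that \<open>A \<subseteq> W\<close> unfolding nbrs_def by auto
    hence "card (nbrs adj A u) < card (nbrs adj W u)"
      using \<open>finite W\<close> by (simp add: finite_nbrs psubset_card_mono)
    moreover have "card (nbrs adj W u) \<le> D" using deg that(1) \<open>A \<subseteq> W\<close> by blast
    ultimately show ?thesis by linarith
  qed
  show ?thesis
  proof (cases "v = x \<or> v = y")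
    case True
    let ?o = "if v = x then y else x"
    have "nbrs (add_edge adj x y) A v \<subseteq> insert ?o (nbrs adj A v)"
      using True unfolding nbrs_def add_edge_def by auto
    hence "card (nbrs (add_edge adj x y) A v) \<le> card (insert ?o (nbrs adj A v))"
      using \<open>finite A\<close> by (intro card_mono) (simp_all add: finite_nbrs)
    also have "\<dots> \<le> Suc (card (nbrs adj A v))"
      using \<open>finite A\<close> by (simp add: card_insert_if finite_nbrs)
    finally show ?thesis using True lost_nbr[OF \<open>x \<in> A\<close> p] lost_nbr[OF \<open>y \<in> A\<close> q] by auto
  next
    case False
    hence "nbrs (add_edge adj x y) A v = nbrs adj A v"
      unfolding nbrs_def add_edge_def by auto
    moreover have "card (nbrs adj A v) \<le> card (nbrs adj W v)"
      using \<open>finite W\<close> \<open>A \<subseteq> W\<close> by (rule card_nbrs_mono)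
    ultimately show ?thesis using deg \<open>v \<in> A\<close> \<open>A \<subseteq> W\<close> by force
  qed
qed

text \<open>The graph with \<open>y\<close> merged into \<open>x\<close>; it is only used on vertex sets not containing \<open>y\<close>.\<close>
definition identify :: "('a \<Rightarrow> 'a \<Rightarrow> bool) \<Rightarrow> 'a \<Rightarrow> 'a \<Rightarrow> 'a \<Rightarrow> 'a \<Rightarrow> bool" where
  "identify adj x y u v \<longleftrightarrow> adj u v \<or> (u = x \<and> adj y v) \<or> (v = x \<and> adj y u)"

lemma symp_identify: "symp adj \<Longrightarrow> symp (identify adj x y)"
  unfolding identify_def by (rule sympI) (metis sympD)

lemma irreflp_identify: "irreflp adj \<Longrightarrow> symp adj \<Longrightarrow> \<not> adj x y \<Longrightarrow> irreflp (identify adj x y)"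
  unfolding irreflp_def identify_def by (metis sympD)

lemma proper_colouring_identify:
  assumes f: "proper_colouring (identify adj x y) (insert x S) f"
    and "irreflp adj" "symp adj" "\<not> adj x y" "y \<notin> S"
  shows "proper_colouring adj (insert x (insert y S)) (f(y := f x))"
proof -
  have main: "(f(y := f x)) u \<noteq> (f(y := f x)) v"
    if "u \<in> insert x (insert y S)" "v \<in> insert x (insert y S)" "adj u v" "u \<noteq> y" for u v
  proof (cases "v = y")
    case True
    hence "u \<in> S" "identify adj x y x u"
      using that assms(2-4) unfolding identify_def by (auto simp: irreflpD symp_iff[of adj y])
    thus ?thesis using f True \<open>u \<noteq> y\<close> unfolding proper_colouring_def
      by (metis fun_upd_apply insertI1 insertI2)
  next
    case False
    with that have "u \<in> insert x S" "v \<in> insert x S" "identify adj x y u v"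
      unfolding identify_def by auto
    hence "f u \<noteq> f v" using f unfolding proper_colouring_def by blast
    thus ?thesis using False \<open>u \<noteq> y\<close> by simp
  qed
  show ?thesis
    unfolding proper_colouring_def
  proof (intro ballI impI)
    fix u v assume uv: "u \<in> insert x (insert y S)" "v \<in> insert x (insert y S)" "adj u v"
    show "(f(y := f x)) u \<noteq> (f(y := f x)) v"
    proof (cases "u = y")
      case True
      hence "v \<noteq> y" using uv(3) assms(2) by (auto simp: irreflpD)
      thus ?thesis using main[OF uv(2,1) sympD[OF assms(3) uv(3)]] by metis
    qed (rule main[OF uv])
  qed
qed

lemma nbrs_identify_self:
  assumes "irreflp adj" "symp adj" "x \<notin> S" "\<not> adj x y"
  shows "nbrs (identify adj x y) (insert x S) x = nbrs adj S x \<union> nbrs adj S y"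
  using assms(1,3,4) unfolding nbrs_def identify_def irreflp_def
  by (auto simp: symp_iff[OF assms(2), of _ y])

lemma card_nbrs_identify_le:
  assumes "finite W" "symp adj" "S \<subseteq> W - {x, y}" "x \<in> W" "y \<in> W" "v \<in> S"
  shows "card (nbrs (identify adj x y) (insert x S) v) \<le> card (nbrs adj W v)"
proof -
  \<comment> \<open>the merged vertex is a neighbour of \<open>v\<close> through \<open>x\<close> or through \<open>y\<close>\<close>
  define \<phi> where "\<phi> u = (if u = x \<and> \<not> adj v x then y else u)" for u
  have "inj_on \<phi> (insert x S)"
    using assms(3) unfolding inj_on_def \<phi>_def by auto
  hence "inj_on \<phi> (nbrs (identify adj x y) (insert x S) v)"
    by (rule inj_on_subset) (auto simp: nbrs_def)
  moreover have "\<phi> u \<in> nbrs adj W v" if "u \<in> nbrs (identify adj x y) (insert x S) v" for u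
  proof (cases "u = x")
    case True
    with that have "adj v x \<or> adj y v"
      using assms(3,6) unfolding nbrs_def identify_def by auto
    thus ?thesis using True assms(2,4,5) unfolding \<phi>_def nbrs_def by (auto dest: sympD)
  next
    case False
    with that show ?thesis
      using assms(3,6) unfolding \<phi>_def nbrs_def identify_def by auto
  qed
  ultimately show ?thesis
    using assms(1) by (intro card_inj_on_le) (auto simp: finite_nbrs)
qed

lemma has_clique_identify:
  assumes "finite S" "x \<notin> S" "card (nbrs (identify adj x y) (insert x S) x) < D"
    and "has_clique (identify adj x y) (insert x S) (Suc D)"
  shows "has_clique adj S (Suc D)"
proof -
  obtain X where X: "X \<subseteq> insert x S" "card X = Suc D" "clique (identify adj x y) X"
    using assms(4) unfolding has_clique_def by blast
  have "x \<notin> X"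
  proof
    assume "x \<in> X"
    hence "X - {x} \<subseteq> nbrs (identify adj x y) (insert x S) x"
      using X unfolding clique_def nbrs_def by auto
    hence "card (X - {x}) \<le> card (nbrs (identify adj x y) (insert x S) x)"
      using assms(1) by (intro card_mono) (auto simp: finite_nbrs)
    thus False using X(2) \<open>x \<in> X\<close> assms(3) by simp
  qed
  hence "X \<subseteq> S" "clique adj X"
    using X unfolding clique_def identify_def by auto
  with X(2) show ?thesis unfolding has_clique_def by blast
qed

section \<open>Brooks' theorem\<close>

definition bounded_degree_clique_free :: "nat \<Rightarrow> ('a \<Rightarrow> 'a \<Rightarrow> bool) \<Rightarrow> 'a set \<Rightarrow> bool" where
  "bounded_degree_clique_free D adj W \<longleftrightarrow> finite W \<and> irreflp adj \<and> symp adj \<and>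
     (\<forall>v\<in>W. card (nbrs adj W v) \<le> D) \<and> \<not> has_clique adj W (Suc D)"

lemma bounded_degree_clique_free_subset:
  assumes "bounded_degree_clique_free D adj W" "W' \<subseteq> W"
  shows "bounded_degree_clique_free D adj W'"
proof -
  have "card (nbrs adj W' v) \<le> card (nbrs adj W v)" for v
    using assms unfolding bounded_degree_clique_free_def by (simp add: card_nbrs_mono)
  thus ?thesis
    using assms has_clique_mono finite_subset unfolding bounded_degree_clique_free_def
    by (metis le_trans subsetD)
qed

locale brooks_step =
  fixes D :: nat and adj :: "'a \<Rightarrow> 'a \<Rightarrow> bool" and W :: "'a set"
  assumes D3: "3 \<le> D"
    and graph: "bounded_degree_clique_free D adj W"
    and smaller: "\<And>adj' (W' :: 'a set). card W' < card W \<Longrightarrow> bounded_degree_clique_free D adj' W' \<Longrightarrow>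
      colourable adj' W' D"
begin

lemma finite_W: "finite W" and irreflp_adj: "irreflp adj" and symp_adj: "symp adj"
  and max_degree: "v \<in> W \<Longrightarrow> card (nbrs adj W v) \<le> D"
  and clique_free: "\<not> has_clique adj W (Suc D)"
  using graph unfolding bounded_degree_clique_free_def by auto

lemma colourable_proper_subset: "W' \<subset> W \<Longrightarrow> colourable adj W' D"
  using smaller psubset_card_mono[OF finite_W] bounded_degree_clique_free_subset[OF graph] by blast

lemma colourable_if_low_degree_vertex: "v \<in> W \<Longrightarrow> card (nbrs adj W v) < D \<Longrightarrow> colourable adj W D"
  by (rule colourable_if_low_degree[OF finite_W irreflp_adj symp_adj _ colourable_proper_subset]) auto

lemma identify_colouring:
  assumes S: "S \<subseteq> W - {x, y}" and "x \<in> W" "y \<in> W" "x \<noteq> y" "\<not> adj x y"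
    and small: "card (nbrs adj S x \<union> nbrs adj S y) < D"
  obtains f where "\<forall>v\<in>insert x (insert y S). f v < D"
    "proper_colouring adj (insert x (insert y S)) f" "f x = f y"
proof -
  have "finite S" using S finite_W finite_subset by blast
  have x_nbrs: "nbrs (identify adj x y) (insert x S) x = nbrs adj S x \<union> nbrs adj S y"
    using S by (intro nbrs_identify_self[OF irreflp_adj symp_adj _ \<open>\<not> adj x y\<close>]) auto
  have "card (nbrs (identify adj x y) (insert x S) v) \<le> D" if "v \<in> insert x S" for v
    using that x_nbrs small card_nbrs_identify_le[OF finite_W symp_adj S \<open>x \<in> W\<close> \<open>y \<in> W\<close>] max_degree S
    by (metis Diff_iff insert_iff le_trans less_imp_le_nat subsetD)
  moreover have "\<not> has_clique (identify adj x y) (insert x S) (Suc D)"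
    using has_clique_identify[OF \<open>finite S\<close> _ small[folded x_nbrs]] has_clique_mono clique_free S
    by blast
  ultimately have "bounded_degree_clique_free D (identify adj x y) (insert x S)"
    unfolding bounded_degree_clique_free_def using \<open>finite S\<close>
      irreflp_identify[OF irreflp_adj symp_adj \<open>\<not> adj x y\<close>] symp_identify[OF symp_adj] by blast
  moreover have "card (insert x S) < card W"
    using S \<open>x \<in> W\<close> \<open>y \<in> W\<close> \<open>x \<noteq> y\<close> by (intro psubset_card_mono[OF finite_W]) auto
  ultimately obtain f where "\<forall>v\<in>insert x S. f v < D" "proper_colouring (identify adj x y) (insert x S) f"
    using smaller unfolding colourable_def by blast
  moreover have "y \<notin> S" using S by blast
  ultimately show thesis
    using that[of "f(y := f x)"] proper_colouring_identify[OF _ irreflp_adj symp_adj \<open>\<not> adj x y\<close>] by auto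
qed

lemma add_edge_colouring:
  assumes S: "S \<subseteq> W - {x, y}" and "x \<in> W" "y \<in> W" "x \<noteq> y"
    and "p \<in> W - insert x (insert y S)" "adj x p" "q \<in> W - insert x (insert y S)" "adj y q"
    and clique_free': "\<not> has_clique (add_edge adj x y) (insert x (insert y S)) (Suc D)"
  obtains f where "\<forall>v\<in>insert x (insert y S). f v < D"
    "proper_colouring adj (insert x (insert y S)) f" "f x \<noteq> f y"
proof -
  let ?A = "insert x (insert y S)"
  have "?A \<subseteq> W" using S \<open>x \<in> W\<close> \<open>y \<in> W\<close> by blast
  moreover have "card (nbrs (add_edge adj x y) ?A v) \<le> D" if "v \<in> ?A" for v
    using max_degree that by (intro card_nbrs_add_edge_le[OF finite_W _ \<open>?A \<subseteq> W\<close> _ _ assms(5-8)]) auto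
  ultimately have "bounded_degree_clique_free D (add_edge adj x y) ?A"
    unfolding bounded_degree_clique_free_def
    using finite_subset[OF _ finite_W] irreflp_add_edge[OF irreflp_adj \<open>x \<noteq> y\<close>]
      symp_add_edge[OF symp_adj] clique_free' by blast
  moreover have "card ?A < card W"
    using \<open>?A \<subseteq> W\<close> assms(5) by (intro psubset_card_mono[OF finite_W]) auto
  ultimately obtain f where "\<forall>v\<in>?A. f v < D" "proper_colouring (add_edge adj x y) ?A f"
    using smaller unfolding colourable_def by blast
  thus thesis using that proper_colouring_add_edgeD[of adj x y ?A f] by simp
qed

lemma exists_nonadjacent_nbrs:
  assumes "z \<in> W" "card (nbrs adj W z) = D"
  obtains x y where "adj z x" "adj z y" "x \<in> W" "y \<in> W" "x \<noteq> y" "\<not> adj x y"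
proof -
  have "\<not> clique adj (nbrs adj W z)"
  proof
    assume "clique adj (nbrs adj W z)"
    hence "clique adj (insert z (nbrs adj W z))"
      using symp_adj unfolding clique_def nbrs_def by (auto dest: sympD)
    moreover have "card (insert z (nbrs adj W z)) = Suc D"
      using assms(2) finite_W not_in_nbrs_self[OF irreflp_adj] by (simp add: finite_nbrs)
    moreover have "insert z (nbrs adj W z) \<subseteq> W" using \<open>z \<in> W\<close> unfolding nbrs_def by blast
    ultimately show False using clique_free unfolding has_clique_def by blast
  qed
  thus thesis using that unfolding clique_def nbrs_def by blast
qed

end

locale brooks_regular = brooks_step +
  fixes x y z :: 'a
  assumes regular: "v \<in> W \<Longrightarrow> card (nbrs adj W v) = D"
    and z_adj: "z \<in> W" "adj z x" "adj z y"
    and xy: "x \<in> W" "y \<in> W" "x \<noteq> y" "\<not> adj x y"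
begin

text \<open>Colour \<open>0\<close> is reserved for the non-adjacent vertices \<open>x\<close> and \<open>y\<close>, which can share it.\<close>
definition palette :: "'a \<Rightarrow> nat set" where
  "palette w = {..<D} - (if adj w x \<or> adj w y then {0} else {})"

lemma card_palette: "card (palette w) = (if adj w x \<or> adj w y then D - 1 else D)"
  using D3 unfolding palette_def by auto

lemma colourable_if_degenerate:
  assumes "\<And>S. S \<subseteq> W - {x, y} \<Longrightarrow> S \<noteq> {} \<Longrightarrow> \<exists>w\<in>S. card (nbrs adj S w) < card (palette w)"
  shows "colourable adj W D"
proof -
  obtain g where g: "\<forall>w\<in>W - {x, y}. g w \<in> palette w" "proper_colouring adj (W - {x, y}) g"
    using list_colouring_if_degenerate[OF _ irreflp_adj symp_adj assms] finite_W by blast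
  define f where "f = g(x := 0, y := 0)"
  have "f v < D" if "v \<in> W" for v
    using that g(1) D3 unfolding f_def palette_def by auto
  moreover have "f u \<noteq> f v" if "u \<in> W" "v \<in> W" "adj u v" for u v
  proof -
    have "adj v u" using symp_adj \<open>adj u v\<close> by (rule sympD)
    have "u \<noteq> v" using irreflp_adj \<open>adj u v\<close> by (auto simp: irreflpD)
    consider "u \<in> {x, y}" "v \<in> {x, y}" | "u \<in> {x, y}" "v \<notin> {x, y}" | "u \<notin> {x, y}" "v \<in> {x, y}"
      | "u \<notin> {x, y}" "v \<notin> {x, y}" by blast
    thus ?thesis
    proof cases
      case 1 thus ?thesis using \<open>adj u v\<close> \<open>adj v u\<close> \<open>u \<noteq> v\<close> xy(4) by auto
    next
      case 2 thus ?thesis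
        using g(1) \<open>adj v u\<close> \<open>v \<in> W\<close> unfolding f_def palette_def by (auto split: if_splits)
    next
      case 3 thus ?thesis
        using g(1) \<open>adj u v\<close> \<open>u \<in> W\<close> unfolding f_def palette_def by (auto split: if_splits)
    next
      case 4 thus ?thesis using g(2) that unfolding f_def proper_colouring_def by auto
    qed
  qed
  ultimately show ?thesis unfolding colourable_def proper_colouring_def by blast
qed

end

text \<open>\<open>K\<close> is a set on which the greedy list colouring of \<open>colourable_if_degenerate\<close> gets stuck;
  it is cut off from the rest of the graph by \<open>{x, y}\<close>, which lets us colour the two sides separately.\<close>
locale brooks_core = brooks_regular +
  fixes K :: "'a set"
  assumes core: "K \<subseteq> W - {x, y}" "K \<noteq> {}"
    and K_dense: "\<And>w. w \<in> K \<Longrightarrow> card (palette w) \<le> card (nbrs adj K w)"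
begin

lemma outer_nbrs:
  assumes "w \<in> K"
  shows "nbrs adj W w - K \<subseteq> {x, y}" and "\<not> (adj w x \<and> adj w y)"
proof -
  let ?O = "nbrs adj W w - K"
  have "w \<in> W" using assms core(1) by blast
  have "nbrs adj K w \<subseteq> nbrs adj W w" using core(1) by (intro nbrs_mono) blast
  moreover have "?O = nbrs adj W w - nbrs adj K w" unfolding nbrs_def by blast
  ultimately have "card ?O = D - card (nbrs adj K w)"
    using regular[OF \<open>w \<in> W\<close>] finite_subset[OF core(1)] finite_W
    by (simp add: card_Diff_subset finite_nbrs)
  hence card_O: "card ?O \<le> (if adj w x \<or> adj w y then 1 else 0)"
    using K_dense[OF assms] card_palette[of w] D3 by (auto split: if_splits)
  have fin_O: "finite ?O" using finite_W by (simp add: finite_nbrs)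
  have xy_O: "adj w e \<Longrightarrow> e \<in> {x, y} \<Longrightarrow> e \<in> ?O" for e
    using xy core(1) unfolding nbrs_def by auto
  show "\<not> (adj w x \<and> adj w y)"
  proof
    assume "adj w x \<and> adj w y"
    hence "{x, y} \<subseteq> ?O" using xy_O by blast
    hence "card {x, y} \<le> card ?O" using fin_O by (rule card_mono[rotated])
    thus False using card_O xy(3) \<open>adj w x \<and> adj w y\<close> by simp
  qed
  show "?O \<subseteq> {x, y}"
  proof (cases "adj w x \<or> adj w y")
    case True
    then obtain e where "e \<in> {x, y}" "e \<in> ?O" using xy_O by blast
    thus ?thesis using card_O True fin_O by (auto simp: card_le_Suc0_iff_eq)
  next
    case False
    hence "?O = {}" using card_O fin_O by simp
    thus ?thesis by blast
  qed
qed

lemma z_notin_K: "z \<notin> K"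
  using outer_nbrs(2) z_adj symp_adj by (blast dest: sympD)

lemma colourable_if_cut_vertex:
  assumes "e \<in> {x, y}" and cut: "\<And>w. w \<in> K \<Longrightarrow> nbrs adj W w - K \<subseteq> {e}"
  shows "colourable adj W D"
proof -
  have "e \<in> W" using assms(1) xy by blast
  have "insert e K \<subset> W" using assms(1) core(1) xy by auto
  then obtain f where f: "\<forall>v\<in>insert e K. f v < D" "proper_colouring adj (insert e K) f"
    using colourable_proper_subset unfolding colourable_def by blast
  have "W - K \<subset> W" using core by blast
  then obtain g where g: "\<forall>v\<in>W - K. g v < D" "proper_colouring adj (W - K) g"
    using colourable_proper_subset unfolding colourable_def by blast
  have "\<forall>u\<in>insert e K - (W - K). \<forall>v\<in>W - K - insert e K. \<not> adj u v"
    using cut \<open>e \<in> W\<close> unfolding nbrs_def by blast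
  moreover have "insert e K \<inter> (W - K) \<subseteq> {e, e}" "e \<in> insert e K \<inter> (W - K)"
    using \<open>e \<in> W\<close> assms(1) core(1) by auto
  ultimately have "colourable adj (insert e K \<union> (W - K)) D"
    by (intro colourable_Un_two_common[OF symp_adj f(2,1) g(2,1)]) auto
  moreover have "insert e K \<union> (W - K) = W" using \<open>e \<in> W\<close> core(1) by blast
  ultimately show ?thesis by simp
qed

lemma core_colouring_distinct:
  obtains f where "\<forall>v\<in>insert x (insert y K). f v < D"
    "proper_colouring adj (insert x (insert y K)) f" "f x \<noteq> f y"
proof (rule add_edge_colouring[OF core(1) xy(1-3)])
  show "z \<in> W - insert x (insert y K)" "z \<in> W - insert x (insert y K)"
    using z_adj z_notin_K irreflp_adj by (auto simp: irreflpD)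
  show "adj x z" "adj y z" using z_adj(2,3) symp_adj by (auto dest: sympD)
  show "\<not> has_clique (add_edge adj x y) (insert x (insert y K)) (Suc D)"
  proof
    assume "has_clique (add_edge adj x y) (insert x (insert y K)) (Suc D)"
    then obtain X where X: "X \<subseteq> insert x (insert y K)" "card X = Suc D" "clique (add_edge adj x y) X"
      unfolding has_clique_def by blast
    show False
    proof (cases "x \<in> X \<and> y \<in> X")
      case True
      have "card (X - {x, y}) = D - 1" using X(2) True xy(3) by (simp add: card_Diff_subset)
      hence "X - {x, y} \<noteq> {}" using D3 by (intro notI) simp
      then obtain w where "w \<in> X" "w \<noteq> x" "w \<noteq> y" by blast
      hence "w \<in> K" "adj w x" "adj w y" using X(1,3) True unfolding clique_def add_edge_def by auto
      thus False using outer_nbrs(2) by blast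
    next
      case False
      with X(3) have "clique adj X" by (rule clique_add_edge)
      moreover have "X \<subseteq> W" using X(1) core(1) xy by blast
      ultimately show False using clique_free X(2) unfolding has_clique_def by blast
    qed
  qed
qed

definition far_side :: "'a set" where
  "far_side = W - K - {x, y}"

lemma far_side: "W - K = insert x (insert y far_side)" "far_side \<subseteq> W - {x, y}" "finite far_side"
  using core(1) xy finite_W unfolding far_side_def by auto

lemma colourable_if_side_colourings:
  assumes f: "\<forall>v\<in>insert x (insert y K). f v < D" "proper_colouring adj (insert x (insert y K)) f"
    and g: "\<forall>v\<in>W - K. g v < D" "proper_colouring adj (W - K) g"
    and same: "f x = f y \<longleftrightarrow> g x = g y"
  shows "colourable adj W D"
proof -
  let ?A = "insert x (insert y K)"
  have "\<not> adj u v" if "u \<in> ?A - (W - K)" "v \<in> (W - K) - ?A" for u v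
  proof
    assume "adj u v"
    have "u \<in> K" using that(1) xy by blast
    hence "v \<in> {x, y}" using outer_nbrs(1)[of u] \<open>adj u v\<close> that(2) unfolding nbrs_def by blast
    thus False using that(2) by blast
  qed
  hence "colourable adj (?A \<union> (W - K)) D"
    using core(1) xy same by (intro colourable_Un_two_common[OF symp_adj f(2,1) g(2,1)]) auto
  moreover have "?A \<union> (W - K) = W" using core(1) xy by blast
  ultimately show ?thesis by simp
qed

lemma far_side_clique:
  assumes "has_clique (add_edge adj x y) (W - K) (Suc D)"
  obtains Y where "Y \<subseteq> far_side" "card Y = D - 1" "\<And>w. w \<in> Y \<Longrightarrow> adj x w \<and> adj y w"
proof -
  obtain X where X: "X \<subseteq> W - K" "card X = Suc D" "clique (add_edge adj x y) X"
    using assms unfolding has_clique_def by blast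
  have "x \<in> X \<and> y \<in> X"
  proof (rule ccontr)
    assume "\<not> (x \<in> X \<and> y \<in> X)"
    with X(3) have "clique adj X" by (rule clique_add_edge)
    thus False using X(1,2) clique_free unfolding has_clique_def by blast
  qed
  hence "X - {x, y} \<subseteq> far_side" "card (X - {x, y}) = D - 1"
    using X(1,2) xy(3) unfolding far_side_def by (auto simp: card_Diff_subset)
  moreover have "adj x w \<and> adj y w" if "w \<in> X - {x, y}" for w
    using X(3) that \<open>x \<in> X \<and> y \<in> X\<close> unfolding clique_def add_edge_def by auto
  ultimately show thesis using that by blast
qed

lemma far_side_clique_nbrs:
  assumes "w1 \<in> K" "adj w1 x" "w2 \<in> K" "adj w2 y"
    and "has_clique (add_edge adj x y) (W - K) (Suc D)"
  shows "card (nbrs adj K x \<union> nbrs adj K y) < D"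
    and "card (nbrs adj far_side x \<union> nbrs adj far_side y) < D"
proof -
  obtain Y where Y: "Y \<subseteq> far_side" "card Y = D - 1" "\<And>w. w \<in> Y \<Longrightarrow> adj x w \<and> adj y w"
    using far_side_clique[OF assms(5)] by blast
  have Y_nbrs: "Y \<subseteq> nbrs adj far_side e" if "e \<in> {x, y}" for e
    using Y(1,3) that unfolding nbrs_def by auto
  have card_nbrs: "card (nbrs adj W e) = D" if "e \<in> {x, y}" for e
    using regular xy that by blast
  have far_nbrs: "nbrs adj far_side e = Y" if "e \<in> {x, y}" "w \<in> K" "adj w e" for e w
  proof -
    have "insert w (nbrs adj far_side e) \<subseteq> nbrs adj W e"
      using that core(1) symp_adj unfolding nbrs_def far_side_def by (auto dest: sympD)
    hence "card (insert w (nbrs adj far_side e)) \<le> D"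
      using card_nbrs[OF that(1)] finite_W by (metis card_mono finite_nbrs)
    moreover have "w \<notin> nbrs adj far_side e" using that(2) unfolding nbrs_def far_side_def by blast
    ultimately have "card (nbrs adj far_side e) \<le> card Y"
      using Y(2) far_side(3) by (simp add: finite_nbrs)
    thus ?thesis using card_seteq[OF finite_nbrs[OF far_side(3)] Y_nbrs[OF that(1)]] by simp
  qed
  have K_nbrs: "card (nbrs adj K e) \<le> 1" if "e \<in> {x, y}" for e
  proof -
    have "nbrs adj K e \<union> Y \<subseteq> nbrs adj W e"
      using Y_nbrs[OF that] core(1) far_side(2) unfolding nbrs_def by auto
    hence "card (nbrs adj K e \<union> Y) \<le> D"
      using card_nbrs[OF that] finite_W by (metis card_mono finite_nbrs)
    moreover have "nbrs adj K e \<inter> Y = {}" using Y(1) unfolding nbrs_def far_side_def by blast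
    moreover have "finite K" "finite Y" using core(1) Y(1) far_side(3) finite_W finite_subset by blast+
    ultimately show ?thesis using Y(2) D3 by (simp add: card_Un_disjoint finite_nbrs)
  qed
  show "card (nbrs adj K x \<union> nbrs adj K y) < D"
    using card_Un_le[of "nbrs adj K x" "nbrs adj K y"] K_nbrs[of x] K_nbrs[of y] D3 by simp
  show "card (nbrs adj far_side x \<union> nbrs adj far_side y) < D"
    using far_nbrs[of x w1] far_nbrs[of y w2] assms(1-4) Y(2) D3 by simp
qed

text \<open>Both sides of the cut \<open>{x, y}\<close> are coloured by induction, either with \<open>x y\<close> joined by an edge or
  with \<open>x\<close> and \<open>y\<close> identified, so that the colour patterns on \<open>{x, y}\<close> agree.\<close>
lemma colourable_if_two_cut:
  assumes "w1 \<in> K" "adj w1 x" "w2 \<in> K" "adj w2 y"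
  shows "colourable adj W D"
proof (cases "has_clique (add_edge adj x y) (W - K) (Suc D)")
  case False
  have "adj x w1" "adj y w2" using assms symp_adj by (auto dest: sympD)
  moreover have "w1 \<in> W - (W - K)" "w2 \<in> W - (W - K)" using assms(1,3) core(1) by blast+
  ultimately obtain g where "\<forall>v\<in>W - K. g v < D" "proper_colouring adj (W - K) g" "g x \<noteq> g y"
    using False add_edge_colouring[OF far_side(2) xy(1-3)] unfolding far_side(1) by metis
  moreover obtain f where "\<forall>v\<in>insert x (insert y K). f v < D"
    "proper_colouring adj (insert x (insert y K)) f" "f x \<noteq> f y"
    by (rule core_colouring_distinct)
  ultimately show ?thesis by (intro colourable_if_side_colourings[of f g]) auto
next
  case True
  obtain f where "\<forall>v\<in>insert x (insert y K). f v < D"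
    "proper_colouring adj (insert x (insert y K)) f" "f x = f y"
    using identify_colouring[OF core(1) xy far_side_clique_nbrs(1)[OF assms True]] by blast
  moreover obtain g where "\<forall>v\<in>W - K. g v < D" "proper_colouring adj (W - K) g" "g x = g y"
    using identify_colouring[OF far_side(2) xy far_side_clique_nbrs(2)[OF assms True]]
    unfolding far_side(1) by blast
  ultimately show ?thesis by (intro colourable_if_side_colourings[of f g]) auto
qed

lemma colourable: "colourable adj W D"
proof (cases "\<exists>w1\<in>K. adj w1 x")
  case False
  have "nbrs adj W w - K \<subseteq> {y}" if "w \<in> K" for w
    using outer_nbrs(1)[OF that] False that unfolding nbrs_def by blast
  moreover have "y \<in> {x, y}" by simp
  ultimately show ?thesis using colourable_if_cut_vertex by blast
next
  case True
  then obtain w1 where w1: "w1 \<in> K" "adj w1 x" by blast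
  show ?thesis
  proof (cases "\<exists>w2\<in>K. adj w2 y")
    case False
    have "nbrs adj W w - K \<subseteq> {x}" if "w \<in> K" for w
      using outer_nbrs(1)[OF that] False that unfolding nbrs_def by blast
    moreover have "x \<in> {x, y}" by simp
    ultimately show ?thesis using colourable_if_cut_vertex by blast
  next
    case True
    then obtain w2 where "w2 \<in> K" "adj w2 y" by blast
    with w1 show ?thesis by (rule colourable_if_two_cut)
  qed
qed

end

context brooks_step
begin

lemma colourable_if_regular:
  assumes regular: "\<And>v. v \<in> W \<Longrightarrow> card (nbrs adj W v) = D"
  shows "colourable adj W D"
proof (cases "W = {}")
  case True
  thus ?thesis unfolding colourable_def proper_colouring_def by blast
next
  case False
  then obtain z where "z \<in> W" by blast
  then obtain x y where "adj z x" "adj z y" "x \<in> W" "y \<in> W" "x \<noteq> y" "\<not> adj x y"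
    using exists_nonadjacent_nbrs regular by metis
  then interpret brooks_regular D adj W x y z
    using regular \<open>z \<in> W\<close> by unfold_locales auto
  show ?thesis
  proof (cases "\<forall>S. S \<subseteq> W - {x, y} \<longrightarrow> S \<noteq> {} \<longrightarrow> (\<exists>w\<in>S. card (nbrs adj S w) < card (palette w))")
    case True
    thus ?thesis by (intro colourable_if_degenerate) blast
  next
    case False
    then obtain K where "K \<subseteq> W - {x, y}" "K \<noteq> {}" "\<forall>w\<in>K. card (palette w) \<le> card (nbrs adj K w)"
      by (auto simp: not_less)
    then interpret brooks_core D adj W x y z K
      by unfold_locales auto
    show ?thesis by (rule colourable)
  qed
qed

end

theorem brooks:
  assumes "3 \<le> D" "bounded_degree_clique_free D adj W"
  shows "colourable adj W D"
  using assms(2)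
proof (induction "card W" arbitrary: adj W rule: less_induct)
  case less
  then interpret brooks_step D adj W
    using assms(1) by unfold_locales auto
  show ?case
  proof (cases "\<exists>v\<in>W. card (nbrs adj W v) < D")
    case True
    thus ?thesis using colourable_if_low_degree_vertex by blast
  next
    case False
    thus ?thesis using max_degree by (intro colourable_if_regular) (simp add: le_antisym not_less)
  qed
qed

section \<open>Graphs without long paths\<close>

lemma successively_rev_symp: "symp adj \<Longrightarrow> successively adj (rev xs) \<longleftrightarrow> successively adj xs"
  by (simp add: symp_iff[of adj] cong: successively_cong)

lemma path_take: "path adj W ps \<Longrightarrow> path adj W (take n ps)"
  unfolding path_def using successively_append_iff[of adj "take n ps" "drop n ps"]
  by (auto dest: in_set_takeD)

lemma length_path_le: "finite W \<Longrightarrow> path adj W ps \<Longrightarrow> length ps \<le> card W"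
  unfolding path_def by (metis card_mono distinct_card)

lemma longest_path_through:
  assumes "finite W" "v \<in> W"
  obtains ps where "path adj W ps" "v \<in> set ps"
    "\<And>qs. path adj W qs \<Longrightarrow> v \<in> set qs \<Longrightarrow> length qs \<le> length ps"
proof -
  have "path adj W [v]" using assms(2) unfolding path_def by simp
  moreover have "\<forall>ps. path adj W ps \<and> v \<in> set ps \<longrightarrow> length ps < Suc (card W)"
    using length_path_le[OF assms(1), of adj] by (simp add: less_Suc_eq_le)
  ultimately obtain ps where "path adj W ps \<and> v \<in> set ps"
    "\<forall>qs. path adj W qs \<and> v \<in> set qs \<longrightarrow> length qs \<le> length ps"
    using ex_has_greatest_nat[of "\<lambda>ps. path adj W ps \<and> v \<in> set ps" "[v]" length "Suc (card W)"] by auto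
  thus thesis using that by blast
qed

lemma path_rotate:
  assumes "symp adj" "path adj W (pre @ w # post)" "pre \<noteq> []" "post \<noteq> []"
    and "adj (hd pre) (last post)" "u \<in> W" "u \<notin> set (pre @ w # post)" "adj w u"
  shows "path adj W (u # w # rev pre @ rev post)"
proof -
  have "successively adj (pre @ [w])" "successively adj post"
    using assms(2) successively_append_iff[of adj "pre @ [w]" post] unfolding path_def by auto
  hence "successively adj (w # rev pre)" "successively adj (rev post)"
    using successively_rev_symp[OF assms(1), of "pre @ [w]"] successively_rev_symp[OF assms(1), of post]
    by (auto simp del: successively_rev)
  hence "successively adj ((w # rev pre) @ rev post)"
    using assms(3-5) by (intro successively_append_iff[THEN iffD2])
      (simp add: last_rev hd_rev del: successively_rev)
  moreover have "adj u w" using assms(1,8) by (rule sympD)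
  ultimately show ?thesis
    using assms(2,6,7) unfolding path_def by (auto simp: successively_Cons)
qed

locale longest_path =
  fixes adj :: "'a \<Rightarrow> 'a \<Rightarrow> bool" and W :: "'a set" and t :: nat and v :: 'a and ps :: "'a list"
  assumes finite_W: "finite W" and irreflp_adj: "irreflp adj" and symp_adj: "symp adj"
    and t_ge_2: "2 \<le> t"
    and min_degree: "\<And>w. w \<in> W \<Longrightarrow> t - 2 \<le> card (nbrs adj W w)"
    and no_path: "\<And>qs. path adj W qs \<Longrightarrow> length qs \<noteq> t"
    and path_ps: "path adj W ps" and v_in_ps: "v \<in> set ps"
    and longest: "\<And>qs. path adj W qs \<Longrightarrow> v \<in> set qs \<Longrightarrow> length qs \<le> length ps"
begin

lemma ps_nonempty: "ps \<noteq> []"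
  using v_in_ps by auto

lemma set_ps_subset: "set ps \<subseteq> W"
  using path_ps unfolding path_def by blast

lemma length_less: "length ps < t"
proof (rule ccontr)
  assume "\<not> length ps < t"
  hence "length (take t ps) = t" by simp
  thus False using no_path path_take[OF path_ps] by blast
qed

lemma card_set_ps_remove: "w \<in> set ps \<Longrightarrow> card (set ps - {w}) = length ps - 1"
  using path_ps unfolding path_def by (simp add: card_Diff_singleton distinct_card)

lemma nbrs_end_subset:
  assumes "e = hd ps \<or> e = last ps"
  shows "nbrs adj W e \<subseteq> set ps"
proof
  fix u assume "u \<in> nbrs adj W e"
  show "u \<in> set ps"
  proof (rule ccontr)
    assume "u \<notin> set ps"
    have "path adj W (u # ps) \<or> path adj W (ps @ [u])"
      using path_ps symp_adj assms \<open>u \<in> nbrs adj W e\<close> \<open>u \<notin> set ps\<close> ps_nonempty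
      unfolding path_def nbrs_def by (auto simp: successively_Cons successively_append_iff dest: sympD)
    thus False using longest v_in_ps by fastforce
  qed
qed

lemma nbrs_end:
  assumes "e = hd ps \<or> e = last ps"
  shows "nbrs adj W e = set ps - {e}"
proof -
  have "e \<in> set ps" using assms ps_nonempty by auto
  have "t - 2 \<le> card (nbrs adj W e)"
    using min_degree \<open>e \<in> set ps\<close> set_ps_subset by blast
  hence "card (set ps - {e}) \<le> card (nbrs adj W e)"
    using card_set_ps_remove[OF \<open>e \<in> set ps\<close>] length_less by linarith
  moreover have "nbrs adj W e \<subseteq> set ps - {e}"
    using nbrs_end_subset[OF assms] not_in_nbrs_self[OF irreflp_adj] by blast
  ultimately show ?thesis by (intro card_seteq) auto
qed

lemma length_eq: "length ps = t - 1"
proof -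
  have "t - 2 \<le> card (nbrs adj W (hd ps))"
    using min_degree[of "hd ps"] hd_in_set[OF ps_nonempty] set_ps_subset by blast
  also have "\<dots> = length ps - 1"
    using nbrs_end[of "hd ps"] card_set_ps_remove[of "hd ps"] ps_nonempty by simp
  finally show ?thesis using length_less ps_nonempty by (cases ps) auto
qed

text \<open>A neighbour off the path would give a path on \<open>t\<close> vertices: since the two ends are adjacent,
  the path can be rotated into one ending at any of its vertices.\<close>
lemma nbrs_closed:
  assumes w: "w \<in> set ps"
  shows "nbrs adj W w \<subseteq> set ps"
proof
  fix u assume u: "u \<in> nbrs adj W w"
  show "u \<in> set ps"
  proof (rule ccontr)
    assume "u \<notin> set ps"
    obtain pre post where split: "ps = pre @ w # post" using split_list[OF w] by blast
    have "pre \<noteq> []"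
    proof
      assume "pre = []"
      hence "w = hd ps" using split by simp
      thus False using nbrs_end[of w] u \<open>u \<notin> set ps\<close> by blast
    qed
    have "post \<noteq> []"
    proof
      assume "post = []"
      hence "w = last ps" using split by simp
      thus False using nbrs_end[of w] u \<open>u \<notin> set ps\<close> by blast
    qed
    have "hd ps \<in> set pre" "last ps \<in> set post"
      using split \<open>pre \<noteq> []\<close> \<open>post \<noteq> []\<close> by auto
    hence "hd ps \<noteq> last ps" using path_ps split unfolding path_def by auto
    hence "last ps \<in> nbrs adj W (hd ps)" using nbrs_end[of "hd ps"] ps_nonempty by simp
    hence "adj (hd pre) (last post)"
      using split \<open>pre \<noteq> []\<close> \<open>post \<noteq> []\<close> unfolding nbrs_def by simp
    hence "path adj W (u # w # rev pre @ rev post)"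
      using path_rotate[OF symp_adj] path_ps split \<open>pre \<noteq> []\<close> \<open>post \<noteq> []\<close> u \<open>u \<notin> set ps\<close>
      unfolding nbrs_def by blast
    moreover have "length (u # w # rev pre @ rev post) = t"
      using length_eq split t_ge_2 by simp
    ultimately show False using no_path by blast
  qed
qed

lemma nbrs_eq:
  assumes "w \<in> set ps"
  shows "nbrs adj W w = set ps - {w}"
proof (rule card_seteq)
  show "finite (set ps - {w})" by simp
  show "nbrs adj W w \<subseteq> set ps - {w}"
    using nbrs_closed[OF assms] not_in_nbrs_self[OF irreflp_adj] by blast
  have "t - 2 \<le> card (nbrs adj W w)" using min_degree assms set_ps_subset by blast
  thus "card (set ps - {w}) \<le> card (nbrs adj W w)"
    using card_set_ps_remove[OF assms] length_eq by simp
qed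

end

lemma nbrs_clique_if_no_long_path:
  assumes "finite W" "irreflp adj" "symp adj" "2 \<le> t"
    and min_degree: "\<And>v. v \<in> W \<Longrightarrow> t - 2 \<le> card (nbrs adj W v)"
    and no_path: "\<And>ps. path adj W ps \<Longrightarrow> length ps \<noteq> t"
    and "v \<in> W"
  shows "card (nbrs adj W v) = t - 2" "clique adj (nbrs adj W v)"
proof -
  obtain ps where "path adj W ps" "v \<in> set ps"
    "\<And>qs. path adj W qs \<Longrightarrow> v \<in> set qs \<Longrightarrow> length qs \<le> length ps"
    using longest_path_through[OF assms(1,7)] by blast
  then interpret longest_path adj W t v ps
    using assms by unfold_locales auto
  show "card (nbrs adj W v) = t - 2"
    using nbrs_eq[OF v_in_ps] card_set_ps_remove[OF v_in_ps] length_eq by simp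
  show "clique adj (nbrs adj W v)"
    using nbrs_eq v_in_ps unfolding clique_def nbrs_def by blast
qed

section \<open>Independent sets and the non-red graph\<close>

lemma indep_set_if_colourable:
  assumes "finite W" "0 < D" "colourable adj W D"
  obtains I where "I \<subseteq> W" "indep_set adj I" "card W \<le> D * card I"
proof -
  obtain f where f: "\<forall>v\<in>W. f v < D" "proper_colouring adj W f"
    using assms(3) unfolding colourable_def by blast
  have "\<exists>c<D. card W \<le> D * card {v\<in>W. f v = c}"
  proof (rule ccontr)
    assume "\<not> ?thesis"
    hence less: "D * card {v\<in>W. f v = c} < card W" if "c \<in> {..<D}" for c
      using that by auto
    have "W = (\<Union>c\<in>{..<D}. {v\<in>W. f v = c})" using f(1) by auto
    also have "card \<dots> = (\<Sum>c\<in>{..<D}. card {v\<in>W. f v = c})"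
      by (rule card_UN_disjoint) (use assms(1) in auto)
    finally have "card W = (\<Sum>c\<in>{..<D}. card {v\<in>W. f v = c})" .
    hence "D * card W = (\<Sum>c\<in>{..<D}. D * card {v\<in>W. f v = c})" by (simp add: sum_distrib_left)
    also have "\<dots> < (\<Sum>c\<in>{..<D}. card W)" using assms(2) less by (intro sum_strict_mono) auto
    finally show False by simp
  qed
  then obtain c where "card W \<le> D * card {v\<in>W. f v = c}" by blast
  moreover have "indep_set adj {v\<in>W. f v = c}"
    using f(2) unfolding indep_set_def proper_colouring_def by force
  ultimately show thesis using that[of "{v\<in>W. f v = c}"] by blast
qed

lemma dvd_card_if_blocks:
  assumes "finite X" and blocks: "\<And>v. v \<in> X \<Longrightarrow> v \<in> B v \<and> B v \<subseteq> X \<and> card (B v) = b"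
    and eq: "\<And>u v. u \<in> X \<Longrightarrow> v \<in> B u \<Longrightarrow> B v = B u"
  shows "b dvd card X"
proof -
  have "\<Union>(B ` X) = X" using blocks by blast
  moreover have "b * card (B ` X) = card (\<Union>(B ` X))"
  proof (rule card_partition)
    show "finite (B ` X)" "finite (\<Union>(B ` X))" using assms(1) blocks by (auto intro: finite_subset)
    show "card c = b" if "c \<in> B ` X" for c using that blocks by auto
    show "c1 \<inter> c2 = {}" if c: "c1 \<in> B ` X" "c2 \<in> B ` X" "c1 \<noteq> c2" for c1 c2
    proof -
      obtain u1 u2 where "u1 \<in> X" "u2 \<in> X" "c1 = B u1" "c2 = B u2" using c(1,2) by blast
      thus ?thesis using c(3) eq by (metis disjoint_iff)
    qed
  qed
  ultimately show ?thesis by (metis dvd_triv_left)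
qed

lemma closed_nbrs_eq_if_nbrs_cliques:
  assumes "finite W" "irreflp adj" "symp adj"
    and cliques: "\<And>v. v \<in> W \<Longrightarrow> card (nbrs adj W v) = s \<and> clique adj (nbrs adj W v)"
    and "u \<in> W" "v \<in> insert u (nbrs adj W u)"
  shows "insert v (nbrs adj W v) = insert u (nbrs adj W u)"
proof -
  have "v \<in> W" using assms(5,6) unfolding nbrs_def by blast
  have "insert u (nbrs adj W u) \<subseteq> insert v (nbrs adj W v)"
    using cliques[OF \<open>u \<in> W\<close>] assms(3,5,6) unfolding clique_def nbrs_def by (auto dest: sympD)
  moreover have "card (insert v (nbrs adj W v)) \<le> card (insert u (nbrs adj W u))"
    using cliques[OF \<open>u \<in> W\<close>] cliques[OF \<open>v \<in> W\<close>] not_in_nbrs_self[OF assms(2)] assms(1)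
    by (simp add: finite_nbrs)
  moreover have "finite (insert v (nbrs adj W v))" using assms(1) by (simp add: finite_nbrs)
  ultimately show ?thesis using card_seteq by blast
qed

text \<open>\<open>nonred u v\<close>: the distinct vertices \<open>u\<close>, \<open>v\<close> are not joined by a red edge, so independent sets of
  \<open>nonred\<close> are red cliques; \<open>blue\<close> is the blue graph. The pairs that are \<open>nonred\<close> but not \<open>blue\<close> are
  the non-edges of \<open>G\<close>, of which each vertex has fewer than \<open>d\<close>.\<close>
locale red_blue_setting =
  fixes nonred blue :: "'a \<Rightarrow> 'a \<Rightarrow> bool" and t d m :: nat
  assumes irreflp_nonred: "irreflp nonred" and symp_nonred: "symp nonred" and symp_blue: "symp blue"
    and blue_nonred: "\<And>u v. blue u v \<Longrightarrow> nonred u v"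
    and t_ge_2: "2 \<le> t" and d_ge_1: "1 \<le> d" and m_lower: "t - 2 + d \<le> m"
    and not_dvd: "m = t - 2 + d \<Longrightarrow> \<not> (t - 1) dvd m"
begin

definition admissible :: "'a set \<Rightarrow> bool" where
  "admissible W \<longleftrightarrow> finite W \<and> (\<forall>v\<in>W. card {u\<in>W. nonred v u \<and> \<not> blue v u} < d) \<and>
     (\<forall>ps. path blue W ps \<longrightarrow> length ps \<noteq> t)"

definition indep_ratio :: "'a set \<Rightarrow> bool" where
  "indep_ratio W \<longleftrightarrow> (\<exists>I\<subseteq>W. indep_set nonred I \<and> card W \<le> (m - 1) * card I)"

lemma irreflp_blue: "irreflp blue"
  using irreflp_nonred blue_nonred by (metis irreflp_def)

lemma m_ge_2: "2 \<le> m"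
proof (rule ccontr)
  assume "\<not> 2 \<le> m"
  hence "t = 2" "d = 1" "m = t - 2 + d" using t_ge_2 d_ge_1 m_lower by auto
  thus False using not_dvd by simp
qed

lemma admissible_subset:
  assumes "admissible W" "W' \<subseteq> W"
  shows "admissible W'"
  unfolding admissible_def
proof (intro conjI ballI allI impI)
  show "finite W'" using assms finite_subset unfolding admissible_def by blast
  fix v assume "v \<in> W'"
  have "card {u\<in>W'. nonred v u \<and> \<not> blue v u} \<le> card {u\<in>W. nonred v u \<and> \<not> blue v u}"
    using assms unfolding admissible_def by (intro card_mono) auto
  thus "card {u\<in>W'. nonred v u \<and> \<not> blue v u} < d"
    using assms \<open>v \<in> W'\<close> unfolding admissible_def by fastforce
next
  fix ps assume "path blue W' ps"
  hence "path blue W ps" using assms(2) unfolding path_def by blast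
  thus "length ps \<noteq> t" using assms(1) unfolding admissible_def by blast
qed

lemma card_nbrs_nonred_le:
  assumes "admissible W" "v \<in> W"
  shows "card (nbrs nonred W v) \<le> card (nbrs blue W v) + (d - 1)"
proof -
  have "finite W" using assms(1) unfolding admissible_def by blast
  have "card (nbrs nonred W v) \<le> card (nbrs blue W v \<union> {u\<in>W. nonred v u \<and> \<not> blue v u})"
    using \<open>finite W\<close> by (intro card_mono) (auto simp: nbrs_def)
  also have "\<dots> \<le> card (nbrs blue W v) + card {u\<in>W. nonred v u \<and> \<not> blue v u}"
    by (rule card_Un_le)
  finally show ?thesis using assms unfolding admissible_def by fastforce
qed

lemma regular_structure:
  assumes "admissible W" "W \<noteq> {}" and min_deg: "\<forall>v\<in>W. m - 1 \<le> card (nbrs nonred W v)"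
  shows "m = t - 2 + d"
    and "\<And>v. v \<in> W \<Longrightarrow> card (nbrs blue W v) = t - 2 \<and> clique blue (nbrs blue W v)"
    and "\<And>v. v \<in> W \<Longrightarrow> card (nbrs nonred W v) = m - 1"
proof -
  have blue_deg: "t - 2 \<le> card (nbrs blue W v)" if "v \<in> W" for v
    using min_deg[rule_format, OF that] card_nbrs_nonred_le[OF assms(1) that] m_lower d_ge_1
    by linarith
  have fin: "finite W" and no_path: "\<And>ps. path blue W ps \<Longrightarrow> length ps \<noteq> t"
    using assms(1) unfolding admissible_def by blast+
  show blue: "card (nbrs blue W v) = t - 2 \<and> clique blue (nbrs blue W v)" if "v \<in> W" for v
    using nbrs_clique_if_no_long_path[OF fin irreflp_blue symp_blue t_ge_2 blue_deg no_path that]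
    by blast
  obtain v where "v \<in> W" using assms(2) by blast
  show "m = t - 2 + d"
    using min_deg[rule_format, OF \<open>v \<in> W\<close>] card_nbrs_nonred_le[OF assms(1) \<open>v \<in> W\<close>]
      blue[OF \<open>v \<in> W\<close>] m_lower d_ge_1
    by linarith
  thus "card (nbrs nonred W v) = m - 1" if "v \<in> W" for v
    using min_deg[rule_format, OF that] card_nbrs_nonred_le[OF assms(1) that] blue[OF that] d_ge_1
    by linarith
qed

lemma dvd_card_if_union_of_blue_blocks:
  assumes "admissible W" "W \<noteq> {}" and min_deg: "\<forall>v\<in>W. m - 1 \<le> card (nbrs nonred W v)"
    and "X \<subseteq> W" and closed: "\<And>v. v \<in> X \<Longrightarrow> insert v (nbrs blue W v) \<subseteq> X"
  shows "(t - 1) dvd card X"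
proof -
  have fin: "finite W" using assms(1) unfolding admissible_def by blast
  note blue = regular_structure(2)[OF assms(1-3)]
  define block where "block v = insert v (nbrs blue W v)" for v
  have "card (block v) = t - 1" if "v \<in> W" for v
    using blue[OF that] not_in_nbrs_self[OF irreflp_blue] fin t_ge_2 unfolding block_def
    by (simp add: finite_nbrs)
  hence "v \<in> block v \<and> block v \<subseteq> X \<and> card (block v) = t - 1" if "v \<in> X" for v
    using that closed \<open>X \<subseteq> W\<close> unfolding block_def by blast
  moreover have "block v = block u" if "u \<in> X" "v \<in> block u" for u v
    using closed_nbrs_eq_if_nbrs_cliques[OF fin irreflp_blue symp_blue blue] that \<open>X \<subseteq> W\<close>
    unfolding block_def by blast
  moreover have "finite X" using \<open>X \<subseteq> W\<close> fin by (rule finite_subset)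
  ultimately show ?thesis by (intro dvd_card_if_blocks[where B = block])
qed

lemma no_clique_if_regular:
  assumes "admissible W" "W \<noteq> {}" and min_deg: "\<forall>v\<in>W. m - 1 \<le> card (nbrs nonred W v)"
  shows "\<not> has_clique nonred W m"
proof
  assume "has_clique nonred W m"
  then obtain X where X: "X \<subseteq> W" "card X = m" "clique nonred X"
    unfolding has_clique_def by blast
  have fin: "finite W" using assms(1) unfolding admissible_def by blast
  have "X = insert v (nbrs nonred W v)" if "v \<in> X" for v
  proof -
    have "finite (insert v (nbrs nonred W v))" using fin by (simp add: finite_nbrs)
    moreover have "X \<subseteq> insert v (nbrs nonred W v)"
      using X that unfolding clique_def nbrs_def by auto
    moreover have "card (insert v (nbrs nonred W v)) \<le> card X"
      using regular_structure(3)[OF assms, of v] that X m_ge_2 not_in_nbrs_self[OF irreflp_nonred] fin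
      by (auto simp: finite_nbrs)
    ultimately show ?thesis by (rule card_seteq)
  qed
  hence "insert v (nbrs blue W v) \<subseteq> X" if "v \<in> X" for v
    using that blue_nonred unfolding nbrs_def by blast
  hence "(t - 1) dvd card X" by (rule dvd_card_if_union_of_blue_blocks[OF assms X(1)])
  thus False using X(2) not_dvd regular_structure(1)[OF assms] by simp
qed

lemma indep_ratio_step:
  assumes "admissible W" "v \<in> W" "indep_ratio (W - insert v (nbrs nonred W v))"
  shows "\<exists>I\<subseteq>W. indep_set nonred I \<and> card W + (m - 1) \<le> (m - 1) * card I + Suc (card (nbrs nonred W v))"
proof -
  let ?N = "insert v (nbrs nonred W v)"
  obtain I where I: "I \<subseteq> W - ?N" "indep_set nonred I" "card (W - ?N) \<le> (m - 1) * card I"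
    using assms(3) unfolding indep_ratio_def by blast
  have fin: "finite W" using assms(1) unfolding admissible_def by blast
  have "\<not> nonred v u" "\<not> nonred u v" if "u \<in> I" for u
    using that I(1) symp_nonred unfolding nbrs_def by (auto dest: sympD)
  hence "indep_set nonred (insert v I)"
    using I(2) irreflp_nonred unfolding indep_set_def by (auto simp: irreflpD)
  moreover have "card W = card (W - ?N) + card ?N"
  proof -
    have "?N \<subseteq> W" using assms(2) unfolding nbrs_def by blast
    thus ?thesis using card_Diff_subset[OF finite_subset[OF _ fin]] card_mono[OF fin] by fastforce
  qed
  moreover have "card ?N = Suc (card (nbrs nonred W v))"
    using fin not_in_nbrs_self[OF irreflp_nonred] by (simp add: finite_nbrs)
  moreover have "card (insert v I) = Suc (card I)"
  proof -
    have "finite I" "v \<notin> I" using I(1) fin finite_subset by auto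
    thus ?thesis by simp
  qed
  ultimately show ?thesis
    using I(1,3) assms(2) by (intro exI[of _ "insert v I"]) auto
qed

lemma indep_ratio_if_low_degree:
  assumes "admissible W" "v \<in> W" "card (nbrs nonred W v) \<le> m - 2"
    and "indep_ratio (W - insert v (nbrs nonred W v))"
  shows "indep_ratio W"
proof -
  obtain I where "I \<subseteq> W" "indep_set nonred I"
    "card W + (m - 1) \<le> (m - 1) * card I + Suc (card (nbrs nonred W v))"
    using indep_ratio_step[OF assms(1,2,4)] by blast
  moreover have "Suc (card (nbrs nonred W v)) \<le> m - 1" using assms(3) m_ge_2 by linarith
  ultimately show ?thesis unfolding indep_ratio_def by (intro exI[of _ I]) auto
qed

lemma regular_bounds:
  assumes "admissible W" "W \<noteq> {}" "\<forall>v\<in>W. m - 1 \<le> card (nbrs nonred W v)"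
  shows "3 \<le> t" "t \<le> m"
proof -
  have m_eq: "m = t - 2 + d" by (rule regular_structure(1)[OF assms])
  hence "t - 1 \<noteq> 1" "m \<noteq> t - 1" using not_dvd by auto
  thus "3 \<le> t" "t \<le> m" using m_eq t_ge_2 d_ge_1 by auto
qed

lemma indep_ratio_if_regular_large:
  assumes "admissible W" "W \<noteq> {}" "\<forall>v\<in>W. m - 1 \<le> card (nbrs nonred W v)" "m \<noteq> 3"
  shows "indep_ratio W"
proof -
  have fin: "finite W" using assms(1) unfolding admissible_def by blast
  have "3 \<le> m - 1" using regular_bounds[OF assms(1-3)] assms(4) by linarith
  have "bounded_degree_clique_free (m - 1) nonred W"
    unfolding bounded_degree_clique_free_def
    using fin irreflp_nonred symp_nonred regular_structure(3)[OF assms(1-3)]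
      no_clique_if_regular[OF assms(1-3)] m_ge_2 by simp
  hence "colourable nonred W (m - 1)" by (rule brooks[OF \<open>3 \<le> m - 1\<close>])
  then obtain I where "I \<subseteq> W" "indep_set nonred I" "card W \<le> (m - 1) * card I"
    using indep_set_if_colourable[OF fin] \<open>3 \<le> m - 1\<close> by (metis gr0I not_numeral_le_zero)
  thus ?thesis unfolding indep_ratio_def by blast
qed

text \<open>For \<open>m = 3\<close> Brooks' theorem is not available; instead the blue graph is a perfect matching,
  so \<open>|W|\<close> is even, which absorbs the loss in one greedy step.\<close>
lemma indep_ratio_if_regular_3:
  assumes "admissible W" "W \<noteq> {}" "\<forall>v\<in>W. m - 1 \<le> card (nbrs nonred W v)" "m = 3"
    and smaller: "\<And>W'. W' \<subset> W \<Longrightarrow> indep_ratio W'"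
  shows "indep_ratio W"
proof -
  have "t = 3" using regular_bounds[OF assms(1-3)] assms(4) by simp
  hence "even (card W)"
    using dvd_card_if_union_of_blue_blocks[OF assms(1-3) subset_refl] by (simp add: nbrs_def)
  obtain v where "v \<in> W" using assms(2) by blast
  hence "indep_ratio (W - insert v (nbrs nonred W v))" by (intro smaller) blast
  then obtain I where "I \<subseteq> W" "indep_set nonred I" "card W + 2 \<le> 2 * card I + 3"
    using indep_ratio_step[OF assms(1) \<open>v \<in> W\<close>] regular_structure(3)[OF assms(1-3) \<open>v \<in> W\<close>] assms(4)
    by auto
  moreover have "card W \<le> 2 * card I"
    using \<open>even (card W)\<close> calculation(3) by presburger
  ultimately show ?thesis using assms(4) unfolding indep_ratio_def by auto
qed


lemma indep_ratio_if_admissible: "admissible W \<Longrightarrow> indep_ratio W"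
proof (induction "card W" arbitrary: W rule: less_induct)
  case less
  have smaller: "indep_ratio W'" if "W' \<subset> W" for W'
  proof -
    have "finite W" using less.prems unfolding admissible_def by blast
    hence "card W' < card W" using that by (rule psubset_card_mono)
    thus ?thesis using less.hyps admissible_subset[OF less.prems] that by blast
  qed
  show ?case
  proof (cases "W = {}")
    case True
    thus ?thesis unfolding indep_ratio_def indep_set_def by auto
  next
    case False
    show ?thesis
    proof (cases "\<exists>v\<in>W. card (nbrs nonred W v) \<le> m - 2")
      case True
      then obtain v where "v \<in> W" "card (nbrs nonred W v) \<le> m - 2" by blast
      moreover have "W - insert v (nbrs nonred W v) \<subset> W" using \<open>v \<in> W\<close> by blast
      ultimately show ?thesis using indep_ratio_if_low_degree[OF less.prems] smaller by blast
    next
      case False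
      hence "\<forall>v\<in>W. m - 1 \<le> card (nbrs nonred W v)" by auto
      thus ?thesis
        using indep_ratio_if_regular_large indep_ratio_if_regular_3 less.prems \<open>W \<noteq> {}\<close> smaller
        by blast
    qed
  qed
qed

end

lemma ceiling_divide_bounds:
  fixes n q :: nat
  assumes "0 < q" "0 < n"
  shows "q * (nat \<lceil>real n / real q\<rceil> - 1) < n" and "n \<le> q * nat \<lceil>real n / real q\<rceil>"
proof -
  define c where "c = nat \<lceil>real n / real q\<rceil>"
  have "0 < \<lceil>real n / real q\<rceil>" using assms by simp
  hence c_real: "real c = of_int \<lceil>real n / real q\<rceil>" and "1 \<le> c" unfolding c_def by linarith+
  have "of_int \<lceil>real n / real q\<rceil> - 1 < real n / real q" by (simp add: ceiling_correct)
  hence "real q * (real c - 1) < real n"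
    using assms(1) unfolding c_real by (simp add: field_simps)
  hence "real (q * (c - 1)) < real n" using \<open>1 \<le> c\<close> by simp
  thus "q * (c - 1) < n" by (simp only: of_nat_less_iff)
  have "real n / real q \<le> of_int \<lceil>real n / real q\<rceil>" by (rule le_of_int_ceiling)
  hence "real n \<le> real c * real q"
    using assms(1) unfolding c_real by (simp only: pos_divide_le_eq of_nat_0_less_iff)
  hence "real n \<le> real (q * c)" by (simp add: mult.commute)
  thus "n \<le> q * c" by (simp only: of_nat_le_iff)
qed

lemma ceiling_fraction_times:
  fixes k m :: nat
  shows "\<lceil>real k / real (k + 1) * real m\<rceil> = int (m - m div (k + 1))"
proof -
  have "real k / real (k + 1) * real m = - (real m / real (k + 1) - of_int (int m))"
    by (simp add: field_simps)
  hence "\<lceil>real k / real (k + 1) * real m\<rceil> = - \<lfloor>real m / real (k + 1) - of_int (int m)\<rfloor>"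
    unfolding ceiling_def by (simp only: minus_minus)
  also have "\<dots> = int m - \<lfloor>real m / real (k + 1)\<rfloor>"
    by (simp only: floor_diff_of_int)
  also have "\<dots> = int m - int (m div (k + 1))"
    using floor_divide_of_nat_eq[of m "k + 1", where 'a = real] by (simp only: of_nat_add)
  also have "\<dots> = int (m - m div (k + 1))" by simp
  finally show ?thesis .
qed

lemma div_parameters:
  fixes t k m :: nat
  assumes "1 \<le> k" "2 \<le> t" "t \<le> k + 3" "(t - 1) * k < m"
  shows "t - 2 \<le> m div (k + 1)" and "m div (k + 1) < m"
    and "m div (k + 1) = t - 2 \<Longrightarrow> \<not> (t - 1) dvd m"
proof -
  have "(t - 2) * (k + 1) \<le> (t - 1) * k + 1"
    using assms(2,3) by (cases t) (auto simp: algebra_simps)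
  thus "t - 2 \<le> m div (k + 1)"
    using assms(4) by (simp add: less_eq_div_iff_mult_less_eq)
  show "m div (k + 1) < m"
    using assms(1,4) by (intro div_less_dividend) auto
  assume "m div (k + 1) = t - 2"
  moreover have "m < (m div (k + 1) + 1) * (k + 1)"
    using div_less_iff_less_mult[of "k + 1" m "m div (k + 1) + 1"] by simp
  ultimately have "m < (t - 1) * (k + 1)"
    using assms(2) by (simp add: Suc_diff_Suc numeral_2_eq_2)
  show "\<not> (t - 1) dvd m"
  proof
    assume "(t - 1) dvd m"
    then obtain a where "m = (t - 1) * a" by blast
    hence "(t - 1) * k < (t - 1) * a" "(t - 1) * a < (t - 1) * (k + 1)"
      using \<open>m < (t - 1) * (k + 1)\<close> assms(4) by simp_all
    hence "k < a" "a < k + 1" by (simp_all only: mult_less_cancel1)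
    thus False by simp
  qed
qed

definition blue_adj :: "'a set set \<Rightarrow> ('a set \<Rightarrow> bool) \<Rightarrow> 'a \<Rightarrow> 'a \<Rightarrow> bool" where
  "blue_adj E c u v \<longleftrightarrow> {u, v} \<in> E \<and> \<not> c {u, v}"

definition nonred_adj :: "'a set set \<Rightarrow> ('a set \<Rightarrow> bool) \<Rightarrow> 'a \<Rightarrow> 'a \<Rightarrow> bool" where
  "nonred_adj E c u v \<longleftrightarrow> u \<noteq> v \<and> \<not> ({u, v} \<in> E \<and> c {u, v})"

lemma has_blue_path_iff: "has_blue_path V E c t \<longleftrightarrow> (\<exists>ps. path (blue_adj E c) V ps \<and> length ps = t)"
  unfolding has_blue_path_def path_def blue_adj_def by (auto simp: successively_conv_nth)

lemma has_red_clique_if_indep_set: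
  assumes "I \<subseteq> V" "indep_set (nonred_adj E c) I" "r \<le> card I"
  shows "has_red_clique V E c r"
proof -
  obtain S where S: "S \<subseteq> I" "card S = r" using assms(3) by (meson obtain_subset_with_card_n)
  have "{x, y} \<in> E \<and> c {x, y}" if "x \<in> S" "y \<in> S" "x \<noteq> y" for x y
    using assms(2) S(1) that unfolding indep_set_def nonred_adj_def by blast
  thus ?thesis using S assms(1) unfolding has_red_clique_def by blast
qed

lemma red_blue_setting_colouring:
  assumes "simple_graph V E" "2 \<le> t" "1 \<le> d" "t - 2 + d \<le> m" "m = t - 2 + d \<Longrightarrow> \<not> (t - 1) dvd m"
  shows "red_blue_setting (nonred_adj E c) (blue_adj E c) t d m"
proof
  have "{u} \<notin> E" for u using assms(1) unfolding simple_graph_def by fastforce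
  thus "blue_adj E c u v \<Longrightarrow> nonred_adj E c u v" for u v
    unfolding blue_adj_def nonred_adj_def by auto
  show "irreflp (nonred_adj E c)" unfolding nonred_adj_def by (simp add: irreflpI)
  show "symp (nonred_adj E c)" "symp (blue_adj E c)"
    unfolding nonred_adj_def blue_adj_def by (auto intro: sympI simp: insert_commute)
qed (use assms in auto)

lemma card_nonred_nonblue_less:
  assumes "simple_graph V E" "v \<in> V" "1 \<le> d" "int (card V) - int d \<le> int (min_degree V E)"
  shows "card {u\<in>V. nonred_adj E c v u \<and> \<not> blue_adj E c v u} < d"
proof -
  have "finite V" using assms(1) unfolding simple_graph_def by blast
  have nbrs: "{u. {v, u} \<in> E} \<subseteq> V - {v}"
    using assms(1) unfolding simple_graph_def by (fastforce simp: card_2_iff)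
  have "{u\<in>V. nonred_adj E c v u \<and> \<not> blue_adj E c v u} = (V - {v}) - {u. {v, u} \<in> E}"
    unfolding nonred_adj_def blue_adj_def by blast
  hence "card {u\<in>V. nonred_adj E c v u \<and> \<not> blue_adj E c v u} = card V - 1 - degree E v"
    using nbrs \<open>finite V\<close> assms(2) unfolding degree_def
    by (simp add: card_Diff_subset finite_subset)
  moreover have "min_degree V E \<le> degree E v"
    using \<open>finite V\<close> assms(2) unfolding min_degree_def by simp
  ultimately show ?thesis using assms(3,4) by linarith
qed

lemma theorem_parameters:
  fixes r t k n m d :: nat
  assumes "2 \<le> r" "2 \<le> t" "1 \<le> k" "int t - 3 \<le> int k" "(r - 1) * (t - 1) * k < n"
    and m_def: "m = nat \<lceil>real n / real (r - 1)\<rceil>" and d_def: "d = m - m div (k + 1)"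
  shows "(r - 1) * (m - 1) < n"
    and "\<lceil>real k / real (k + 1) * real_of_int \<lceil>real n / real (r - 1)\<rceil>\<rceil> = int d"
    and "1 \<le> d" "t - 2 + d \<le> m" "m = t - 2 + d \<Longrightarrow> \<not> (t - 1) dvd m"
proof -
  have "0 < n" using assms(5) by linarith
  have "0 < r - 1" using assms(1) by simp
  note m_bounds = ceiling_divide_bounds[OF this \<open>0 < n\<close>, folded m_def]
  show "(r - 1) * (m - 1) < n" by (rule m_bounds(1))
  have "(r - 1) * ((t - 1) * k) < (r - 1) * m"
    using assms(5) m_bounds(2) by (metis less_le_trans mult.assoc)
  hence "(t - 1) * k < m" by simp
  note params = div_parameters[OF assms(3,2) _ this]
  show "\<lceil>real k / real (k + 1) * real_of_int \<lceil>real n / real (r - 1)\<rceil>\<rceil> = int d"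
    using ceiling_fraction_times[of k m] \<open>0 < n\<close> assms(1) unfolding m_def d_def by simp
  show "1 \<le> d" "t - 2 + d \<le> m" "m = t - 2 + d \<Longrightarrow> \<not> (t - 1) dvd m"
    using params assms(4) unfolding d_def by auto
qed

theorem theorem1p3:
  fixes V :: "'a set" and E :: "'a set set" and r t k n :: nat
  assumes "r \<ge> 2" and "t \<ge> 2" and "k \<ge> 1" and "int k \<ge> int t - 3"
    and "simple_graph V E" and "card V = n"
    and "(r - 1) * (t - 1) * k < n" and "n \<le> (r - 1) * (t - 1) * (k + 1)"
    and "int (min_degree V E) \<ge>
           int n - \<lceil>(real k / real (k + 1)) * real_of_int \<lceil>real n / real (r - 1)\<rceil>\<rceil>"
  shows "arrows V E r t"
proof -
  \<comment> \<open>the upper bound on \<open>n\<close> only singles out \<open>k\<close>; the argument does not use it\<close>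
  define m where "m = nat \<lceil>real n / real (r - 1)\<rceil>"
  define d where "d = m - m div (k + 1)"
  note params = theorem_parameters[OF assms(1-4,7) m_def d_def]
  have "int (card V) - int d \<le> int (min_degree V E)" using assms(6,9) params(2) by simp
  show ?thesis unfolding arrows_def
  proof (intro allI disjCI)
    fix c assume "\<not> has_blue_path V E c t"
    interpret red_blue_setting "nonred_adj E c" "blue_adj E c" t d m
      by (rule red_blue_setting_colouring[OF assms(5,2) params(3-5)])
    have "admissible V"
      unfolding admissible_def using assms(5) card_nonred_nonblue_less[OF assms(5) _ params(3)]
        \<open>int (card V) - int d \<le> int (min_degree V E)\<close> \<open>\<not> has_blue_path V E c t\<close>
      by (auto simp: simple_graph_def has_blue_path_iff)
    then obtain I where I: "I \<subseteq> V" "indep_set (nonred_adj E c) I" "n \<le> (m - 1) * card I"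
      using indep_ratio_if_admissible assms(6) unfolding indep_ratio_def by blast
    have "(m - 1) * (r - 1) < (m - 1) * card I"
      using params(1) I(3) by (metis less_le_trans mult.commute)
    hence "r \<le> card I" by (simp, linarith)
    with I(1,2) show "has_red_clique V E c r" by (rule has_red_clique_if_indep_set)
  qed
qed

end
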